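(* Let $0\le r\le\infty$, let $f:V\to W$ be a smooth map between finite-dimensional real inner product spaces with $|f|_{[r]}<\infty$, let $\omega\in\mathcal B_k^r(W)$ and $J\in\mathcal N_k^r(V)$. Then $$\int_Jf^*\omega=\int_{f_*J}\omega.$$
   Context: For a simple $k$-vector $\alpha=w_1\wedge\dots\wedge w_k$, $M(\alpha)=\sqrt{\det\langle w_i,w_j\rangle}$. A monopolar $k$-chain in $V$ is a finite formal sum $\sum_i(p_i;\alpha_i)$, $p_i\in V$, $\alpha_i\in\Lambda_k(V)$, linear in the second slot at each point. $T_u(p;\alpha)=(p+u;\alpha)$, $\Delta_u=T_u-\mathrm{id}$, $\Delta^j_U=\Delta_{u_1}\circ\dots\circ\Delta_{u_j}$, $\|\Delta^j_U(p;\alpha)\|_j=|u_1|\cdots|u_j|M(\alpha)$. A $k$-form is a linear functional $\omega$ on monopolar $k$-chains; $\|\omega\|_0=\sup\{|\omega(p;\alpha)|:\alpha$ simple, $M(\alpha)=1\}$, $\|\omega\|_j=\sup\{|\omega(\Delta^j_U(p;\alpha))|:\|\Delta^j_U(p;\alpha)\|_j=1\}$, $|\omega|^{\natural_r}=\max_{0\le j\le r}\|\omega\|_j$, $\mathcal B_k^r$ = forms with finite norm. For a chain $P$, $|P|^{\natural_r}=\sup_{0\ne\omega\in\mathcal B_k^r}\omega(P)/|\omega|^{\natural_r}$; $\mathcal N_k^r$ is the completion of monopolar $k$-chains in this norm. For $J\in\mathcal N_k^r$, $\omega\in\mathcal B_k^r$: $\int_J\omega=\lim_i\omega(P_i)$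 for monopolar $P_i\to J$. Pushforward on chains: $f_*(x;v_1\wedge\dots\wedge v_k)=(f(x);Df_xv_1\wedge\dots\wedge Df_xv_k)$; $\|f\|_{[j]}=\sup|f_*\Delta^j_U(x;\alpha)|^{\natural_j}/\|\Delta^j_U(x;\alpha)\|_j$, $|f|_{[r]}=\max_{j\le r}\|f\|_{[j]}$; when $|f|_{[r]}<\infty$, $f_*$ extends continuously to chainlets, $f_*J=\lim f_*P_i$. Pullback: $f^*\omega(x;\alpha)=\omega(f_*(x;\alpha))$. *)

theory Defs
  imports "HOL-Analysis.Analysis" "HOL-Library.Extended_Nat"
begin

text \<open>A simple k-vector w_1 ^ ... ^ w_k is represented by the list [w_1,...,w_k]
  (length k).  A monopolar k-chain is represented by a finite list of monopoles
  (p, c, ws), standing for the formal sum of the terms (p; c w_1 ^ ... ^ w_k).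
  Every k-vector is a finite sum of simple ones, so every monopolar chain has
  such a representation.\<close>

type_synonym 'v monopole = "'v \<times> real \<times> 'v list"
type_synonym 'v mchain = "'v monopole list"

definition gram_det :: "'v::real_inner list \<Rightarrow> real" where
  "gram_det ws = (\<Sum>\<sigma> | \<sigma> permutes {..<length ws}.
      of_int (sign \<sigma>) * (\<Prod>i<length ws. inner (ws ! i) (ws ! \<sigma> i)))"

definition mass_simple :: "'v::real_inner list \<Rightarrow> real" where
  "mass_simple ws = sqrt (gram_det ws)"

definition is_mchain :: "nat \<Rightarrow> 'v mchain \<Rightarrow> bool" where
  "is_mchain k P \<longleftrightarrow> (\<forall>m\<in>set P. length (snd (snd m)) = k)"

definition chain_neg :: "'v mchain \<Rightarrow> 'v mchain" where
  "chain_neg P = map (\<lambda>(p, c, ws). (p, - c, ws)) P"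

definition chain_diff :: "'v mchain \<Rightarrow> 'v mchain \<Rightarrow> 'v mchain" where
  "chain_diff P Q = P @ chain_neg Q"

definition chain_translate :: "'v::real_vector \<Rightarrow> 'v mchain \<Rightarrow> 'v mchain" where
  "chain_translate u P = map (\<lambda>(p, c, ws). (p + u, c, ws)) P"

definition chain_Delta :: "'v::real_vector \<Rightarrow> 'v mchain \<Rightarrow> 'v mchain" where
  "chain_Delta u P = chain_diff (chain_translate u P) P"

fun chain_DeltaU :: "'v::real_vector list \<Rightarrow> 'v mchain \<Rightarrow> 'v mchain" where
  "chain_DeltaU [] P = P"
| "chain_DeltaU (u # U) P = chain_Delta u (chain_DeltaU U P)"

definition diff_cell :: "'v::real_vector list \<Rightarrow> 'v \<Rightarrow> 'v list \<Rightarrow> 'v mchain" where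
  "diff_cell U p ws = chain_DeltaU U [(p, 1, ws)]"

definition diff_cell_norm :: "'v::real_inner list \<Rightarrow> 'v list \<Rightarrow> real" where
  "diff_cell_norm U ws = (\<Prod>u\<leftarrow>U. norm u) * mass_simple ws"

text \<open>A k-form (linear functional on monopolar k-chains) is the same as a family,
  indexed by points p, of linear functionals on Lambda_k(V), i.e. of alternating
  k-linear forms.  We represent it by omega p [w_1,...,w_k] = omega(p; w_1^...^w_k),
  normalised to be 0 on lists of length different from k.\<close>

definition is_kform :: "nat \<Rightarrow> ('v::real_vector \<Rightarrow> 'v list \<Rightarrow> real) \<Rightarrow> bool" where
  "is_kform k \<omega> \<longleftrightarrow>
     (\<forall>p ws. length ws \<noteq> k \<longrightarrow> \<omega> p ws = 0) \<and>
     (\<forall>p ws i. length ws = k \<longrightarrow> i < k \<longrightarrow> linear (\<lambda>v. \<omega> p (ws[i := v]))) \<and>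
     (\<forall>p ws i j. length ws = k \<longrightarrow> i < k \<longrightarrow> j < k \<longrightarrow> i \<noteq> j \<longrightarrow> ws ! i = ws ! j
         \<longrightarrow> \<omega> p ws = 0)"

definition form_eval :: "('v \<Rightarrow> 'v list \<Rightarrow> real) \<Rightarrow> 'v mchain \<Rightarrow> real" where
  "form_eval \<omega> P = (\<Sum>(p, c, ws)\<leftarrow>P. c * \<omega> p ws)"

text \<open>||omega||_j = sup{ |omega(Delta^j_U(p;alpha))| : alpha simple,
  ||Delta^j_U(p;alpha)||_j = 1 } (for j = 0 this is ||omega||_0).  The value 0 is
  inserted so that the supremum of an empty set is 0.\<close>
definition form_jnorm :: "nat \<Rightarrow> nat \<Rightarrow> ('v::real_inner \<Rightarrow> 'v list \<Rightarrow> real) \<Rightarrow> ereal" where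
  "form_jnorm k j \<omega> = Sup (insert 0 {ereal \<bar>form_eval \<omega> (diff_cell U p ws)\<bar> | U p ws.
       length U = j \<and> length ws = k \<and> diff_cell_norm U ws = 1})"

definition form_norm :: "nat \<Rightarrow> enat \<Rightarrow> ('v::real_inner \<Rightarrow> 'v list \<Rightarrow> real) \<Rightarrow> ereal" where
  "form_norm k r \<omega> = (SUP j \<in> {j. enat j \<le> r}. form_jnorm k j \<omega>)"

definition Bform :: "nat \<Rightarrow> enat \<Rightarrow> ('v::real_inner \<Rightarrow> 'v list \<Rightarrow> real) \<Rightarrow> bool" where
  "Bform k r \<omega> \<longleftrightarrow> is_kform k \<omega> \<and> form_norm k r \<omega> < \<infinity>"

definition chain_norm :: "nat \<Rightarrow> enat \<Rightarrow> 'v::real_inner mchain \<Rightarrow> ereal" where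
  "chain_norm k r P = Sup (insert 0 {ereal (form_eval \<omega> P / real_of_ereal (form_norm k r \<omega>)) | \<omega>.
       Bform k r \<omega> \<and> (\<exists>p ws. \<omega> p ws \<noteq> 0)})"

text \<open>An element J of N_k^r (the completion) is represented by a Cauchy sequence
  of monopolar k-chains in the natural-r norm.\<close>
definition chain_Cauchy :: "nat \<Rightarrow> enat \<Rightarrow> (nat \<Rightarrow> 'v::real_inner mchain) \<Rightarrow> bool" where
  "chain_Cauchy k r P \<longleftrightarrow> (\<forall>i. is_mchain k (P i)) \<and>
     (\<forall>e>0. \<exists>N. \<forall>m\<ge>N. \<forall>n\<ge>N. chain_norm k r (chain_diff (P m) (P n)) < ereal e)"

text \<open>f is C^infinity: Frechet derivatives of all orders exist everywhere.
  D n x [h_1,...,h_n] is the n-th derivative at x applied to h_1,...,h_n.\<close>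
definition smooth_map :: "('a::real_normed_vector \<Rightarrow> 'b::real_normed_vector) \<Rightarrow> bool" where
  "smooth_map f \<longleftrightarrow> (\<exists>D :: nat \<Rightarrow> 'a \<Rightarrow> 'a list \<Rightarrow> 'b.
      (\<forall>x. D 0 x [] = f x) \<and>
      (\<forall>n us x. length us = n \<longrightarrow>
          ((\<lambda>y. D n y us) has_derivative (\<lambda>h. D (Suc n) x (h # us))) (at x)))"

definition push_chain :: "('a::real_normed_vector \<Rightarrow> 'b::real_normed_vector) \<Rightarrow> 'a mchain \<Rightarrow> 'b mchain" where
  "push_chain f P = map (\<lambda>(x, c, vs). (f x, c, map (frechet_derivative f (at x)) vs)) P"

definition map_jnorm :: "nat \<Rightarrow> nat \<Rightarrow> ('a::real_inner \<Rightarrow> 'b::real_inner) \<Rightarrow> ereal" where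
  "map_jnorm k j f = Sup (insert 0 {chain_norm k (enat j) (push_chain f (diff_cell U x ws))
        / ereal (diff_cell_norm U ws) | U x ws.
       length U = j \<and> length ws = k \<and> diff_cell_norm U ws \<noteq> 0})"

definition map_norm :: "nat \<Rightarrow> enat \<Rightarrow> ('a::real_inner \<Rightarrow> 'b::real_inner) \<Rightarrow> ereal" where
  "map_norm k r f = (SUP j \<in> {j. enat j \<le> r}. map_jnorm k j f)"

definition pullback :: "('a::real_normed_vector \<Rightarrow> 'b::real_normed_vector) \<Rightarrow> ('b \<Rightarrow> 'b list \<Rightarrow> real)
    \<Rightarrow> ('a \<Rightarrow> 'a list \<Rightarrow> real)" where
  "pullback f \<omega> = (\<lambda>x vs. \<omega> (f x) (map (frechet_derivative f (at x)) vs))"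

end

theory Submission
  imports Defs
begin

(* The key estimate is |omega(P)| <= |P|^r |omega|^r for omega in B_k^r.  It holds because
  |P|^r is the supremum of omega(P)/|omega|^r, and a nonzero k-form has positive norm: it is
  nonzero on some orthonormal frame, a cell of mass 1.  On monopolar chains f^*omega(P) equals
  omega(f_* P), and testing f^*omega on difference cells gives |f^*omega|^r <= |f|_[r] |omega|^r,
  so f^*omega lies in B_k^r.  Hence f^*omega(P_i) is Cauchy, with limit L say, and
  omega(Q_i) - f^*omega(P_i) = omega(Q_i - f_* P_i) tends to 0. *)

lemma form_eval_Nil [simp]: "form_eval \<omega> [] = 0"
  by (simp add: form_eval_def)

lemma form_eval_Cons [simp]: "form_eval \<omega> ((p, c, ws) # P) = c * \<omega> p ws + form_eval \<omega> P"
  by (simp add: form_eval_def)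

lemma form_eval_append [simp]: "form_eval \<omega> (P @ Q) = form_eval \<omega> P + form_eval \<omega> Q"
  by (simp add: form_eval_def)

lemma form_eval_chain_neg [simp]: "form_eval \<omega> (chain_neg P) = - form_eval \<omega> P"
  by (induction P) (auto simp: chain_neg_def)

lemma form_eval_chain_diff [simp]:
  "form_eval \<omega> (chain_diff P Q) = form_eval \<omega> P - form_eval \<omega> Q"
  by (simp add: chain_diff_def)

lemma form_eval_uminus: "form_eval (\<lambda>p ws. - \<omega> p ws) P = - form_eval \<omega> P"
  by (induction P) auto

lemma form_eval_pullback: "form_eval (pullback f \<omega>) P = form_eval \<omega> (push_chain f P)"
  by (induction P) (auto simp: push_chain_def pullback_def)

lemma multilinear_eq_0_if_Basis:
  fixes \<phi> :: "'a::euclidean_space list \<Rightarrow> 'b::real_vector"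
  assumes lin: "\<And>ws i. length ws = k \<Longrightarrow> i < k \<Longrightarrow> linear (\<lambda>v. \<phi> (ws[i := v]))"
    and Basis_0: "\<And>bs. length bs = k \<Longrightarrow> set bs \<subseteq> Basis \<Longrightarrow> \<phi> bs = 0"
    and "length ws = k"
  shows "\<phi> ws = 0"
proof -
  have "\<forall>ws. length ws = k \<longrightarrow> (\<forall>i<k. n \<le> i \<longrightarrow> ws ! i \<in> Basis) \<longrightarrow> \<phi> ws = 0"
    if "n \<le> k" for n
    using that
  proof (induction n)
    case 0
    then show ?case
      by (auto intro!: Basis_0 simp: subset_iff in_set_conv_nth)
  next
    case (Suc n)
    show ?case
    proof (intro allI impI)
      fix ws :: "'a list"
      assume ws: "length ws = k" "\<forall>i<k. Suc n \<le> i \<longrightarrow> ws ! i \<in> Basis"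
      have n: "n < k"
        using Suc.prems by simp
      have "\<phi> ws = \<phi> (ws[n := (\<Sum>b\<in>Basis. (ws ! n \<bullet> b) *\<^sub>R b)])"
        by (simp add: euclidean_representation)
      also have "\<dots> = (\<Sum>b\<in>Basis. (ws ! n \<bullet> b) *\<^sub>R \<phi> (ws[n := b]))"
        using linear_sum[OF lin[OF ws(1) n], of "\<lambda>b. (ws ! n \<bullet> b) *\<^sub>R b" Basis]
          linear_scale[OF lin[OF ws(1) n]]
        by simp
      also have "\<dots> = 0"
        using Suc.IH Suc.prems ws by (intro sum.neutral) (auto simp: nth_list_update)
      finally show "\<phi> ws = 0" .
    qed
  qed
  from this[of k] show ?thesis
    using assms(3) by simp
qed

lemma gram_det_distinct_Basis:
  fixes bs :: "'a::euclidean_space list"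
  assumes "set bs \<subseteq> Basis" "distinct bs"
  shows "gram_det bs = 1"
proof -
  let ?S = "{\<sigma>. \<sigma> permutes {..<length bs}}"
  let ?t = "\<lambda>\<sigma>. of_int (sign \<sigma>) * (\<Prod>i<length bs. bs ! i \<bullet> bs ! \<sigma> i)"
  have off_id: "?t \<sigma> = 0" if "\<sigma> \<in> ?S - {id}" for \<sigma>
  proof -
    have \<sigma>: "\<sigma> permutes {..<length bs}" "\<sigma> \<noteq> id"
      using that by auto
    then obtain i where i: "i < length bs" "\<sigma> i \<noteq> i"
      by (metis eq_id_iff lessThan_iff permutes_not_in)
    have "\<sigma> i < length bs"
      using permutes_in_image[OF \<sigma>(1)] i(1) by simp
    then have "bs ! i \<bullet> bs ! \<sigma> i = 0"
      using assms i by (simp add: nth_eq_iff_index_eq inner_not_same_Basis subset_iff)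
    then have "(\<Prod>i<length bs. bs ! i \<bullet> bs ! \<sigma> i) = 0"
      using i(1) by (intro prod_zero) auto
    then show ?thesis
      by simp
  qed
  have "gram_det bs = ?t id + sum ?t (?S - {id})"
    unfolding gram_det_def using sum.remove[of ?S id ?t] by (simp add: finite_permutations)
  also have "sum ?t (?S - {id}) = 0"
    using off_id by (intro sum.neutral) blast
  also have "?t id = 1"
  proof -
    have "bs ! i \<bullet> bs ! i = 1" if "i < length bs" for i
      using assms(1) that by (simp add: subset_iff)
    then show ?thesis
      by simp
  qed
  finally show ?thesis
    by simp
qed

lemma kform_nonzero_on_distinct_Basis:
  fixes \<omega> :: "'a::euclidean_space \<Rightarrow> 'a list \<Rightarrow> real"
  assumes \<omega>: "is_kform k \<omega>" and "\<omega> p ws \<noteq> 0"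
  obtains bs where "length bs = k" "set bs \<subseteq> Basis" "distinct bs" "\<omega> p bs \<noteq> 0"
proof -
  have "length ws = k"
    using assms unfolding is_kform_def by metis
  moreover have "\<And>ws i. length ws = k \<Longrightarrow> i < k \<Longrightarrow> linear (\<lambda>v. \<omega> p (ws[i := v]))"
    using \<omega> unfolding is_kform_def by blast
  ultimately obtain bs where bs: "length bs = k" "set bs \<subseteq> Basis" "\<omega> p bs \<noteq> 0"
    using multilinear_eq_0_if_Basis[of k "\<omega> p" ws] assms(2) by blast
  moreover have "distinct bs"
    using \<omega> bs unfolding is_kform_def distinct_conv_nth by metis
  ultimately show ?thesis
    using that by blast
qed

lemma form_jnorm_nonneg: "0 \<le> form_jnorm k j \<omega>"
  unfolding form_jnorm_def by (rule Sup_upper) simp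

lemma form_jnorm_le_form_norm: "enat j \<le> r \<Longrightarrow> form_jnorm k j \<omega> \<le> form_norm k r \<omega>"
  unfolding form_norm_def by (rule SUP_upper) simp

lemma form_norm_nonneg: "0 \<le> form_norm k r \<omega>"
  using form_jnorm_le_form_norm[of 0 r k \<omega>] form_jnorm_nonneg[of k 0 \<omega>]
  by (simp add: zero_enat_def[symmetric])

lemma form_norm_mono: "r \<le> s \<Longrightarrow> form_norm k r \<omega> \<le> form_norm k s \<omega>"
  unfolding form_norm_def by (rule SUP_subset_mono) auto

lemma chain_norm_nonneg: "0 \<le> chain_norm k r P"
  unfolding chain_norm_def by (rule Sup_upper) simp

lemma map_jnorm_nonneg: "0 \<le> map_jnorm k j f"
  unfolding map_jnorm_def by (rule Sup_upper) simp

lemma map_norm_nonneg: "0 \<le> map_norm k r f"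
  using map_jnorm_nonneg[of k 0 f] SUP_upper[of 0 "{j. enat j \<le> r}" "\<lambda>j. map_jnorm k j f"]
  unfolding map_norm_def by (simp add: zero_enat_def[symmetric])

lemma form_norm_pos:
  fixes \<omega> :: "'a::euclidean_space \<Rightarrow> 'a list \<Rightarrow> real"
  assumes "is_kform k \<omega>" "\<omega> p ws \<noteq> 0"
  shows "0 < form_norm k r \<omega>"
proof -
  obtain bs where bs: "length bs = k" "set bs \<subseteq> Basis" "distinct bs" "\<omega> p bs \<noteq> 0"
    using kform_nonzero_on_distinct_Basis[OF assms] .
  have "diff_cell_norm [] bs = 1"
    using gram_det_distinct_Basis[OF bs(2,3)] by (simp add: diff_cell_norm_def mass_simple_def)
  then have "ereal \<bar>form_eval \<omega> (diff_cell [] p bs)\<bar> \<le> form_jnorm k 0 \<omega>"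
    unfolding form_jnorm_def using bs(1) by (intro Sup_upper) blast
  moreover have "form_eval \<omega> (diff_cell [] p bs) = \<omega> p bs"
    by (simp add: diff_cell_def)
  ultimately have "0 < form_jnorm k 0 \<omega>"
    using bs(4) by (metis zero_less_abs_iff ereal_less(2) order_less_le_trans)
  then show ?thesis
    using form_jnorm_le_form_norm[of 0 r k \<omega>] by (simp add: zero_enat_def[symmetric])
qed

lemma is_kform_uminus: "is_kform k \<omega> \<Longrightarrow> is_kform k (\<lambda>p ws. - \<omega> p ws)"
  unfolding is_kform_def by (auto intro: linear_compose_neg)

lemma form_norm_uminus: "form_norm k r (\<lambda>p ws. - \<omega> p ws) = form_norm k r \<omega>"
  unfolding form_norm_def form_jnorm_def by (simp add: form_eval_uminus)

lemma Bform_uminus: "Bform k r \<omega> \<Longrightarrow> Bform k r (\<lambda>p ws. - \<omega> p ws)"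
  by (simp add: Bform_def is_kform_uminus form_norm_uminus)

lemma form_eval_div_form_norm_le_chain_norm:
  assumes "Bform k r \<omega>" "\<omega> p ws \<noteq> 0"
  shows "ereal (form_eval \<omega> P / real_of_ereal (form_norm k r \<omega>)) \<le> chain_norm k r P"
  unfolding chain_norm_def using assms by (intro Sup_upper) blast

lemma abs_form_eval_le:
  fixes \<omega> :: "'a::euclidean_space \<Rightarrow> 'a list \<Rightarrow> real"
  assumes \<omega>: "Bform k r \<omega>" and P: "chain_norm k r P \<le> ereal c"
  shows "\<bar>form_eval \<omega> P\<bar> \<le> c * real_of_ereal (form_norm k r \<omega>)"
proof -
  define N where "N = real_of_ereal (form_norm k r \<omega>)"
  have c: "0 \<le> c"
    using order_trans[OF chain_norm_nonneg P] by simp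
  (* chain_norm sees only nonzero forms, through omega(P)/|omega|; using both omega and -omega
    bounds both signs of omega(P). *)
  show ?thesis
  proof (cases "\<exists>p ws. \<omega> p ws \<noteq> 0")
    case False
    then have "form_eval \<omega> P = 0"
      by (induction P) auto
    then show ?thesis
      using c form_norm_nonneg[of k r \<omega>] by (simp add: real_of_ereal_pos)
  next
    case True
    then obtain p ws where nz: "\<omega> p ws \<noteq> 0"
      by blast
    have "0 < N"
      using form_norm_pos[of k \<omega> p ws r] nz \<omega> unfolding N_def Bform_def
      by (cases "form_norm k r \<omega>") auto
    moreover have "form_eval \<omega> P / N \<le> c"
      using order_trans[OF form_eval_div_form_norm_le_chain_norm[OF \<omega> nz] P] unfolding N_def
      by simp
    moreover have "- form_eval \<omega> P / N \<le> c"
      using order_trans[OF form_eval_div_form_norm_le_chain_norm[OF Bform_uminus[OF \<omega>]] P] nz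
      unfolding N_def by (simp add: form_eval_uminus form_norm_uminus)
    ultimately have "form_eval \<omega> P \<le> c * N" "- form_eval \<omega> P \<le> c * N"
      by (simp_all add: field_simps)
    then show ?thesis
      unfolding N_def by linarith
  qed
qed

lemma smooth_map_differentiable:
  assumes "smooth_map f"
  shows "f differentiable (at x)"
proof -
  obtain D :: "nat \<Rightarrow> 'a \<Rightarrow> 'a list \<Rightarrow> 'b" where D: "\<forall>x. D 0 x [] = f x"
    "\<forall>n us x. length us = n \<longrightarrow> ((\<lambda>y. D n y us) has_derivative (\<lambda>h. D (Suc n) x (h # us))) (at x)"
    using assms unfolding smooth_map_def by blast
  have "((\<lambda>y. D 0 y []) has_derivative (\<lambda>h. D 1 x [h])) (at x)"
    using D(2)[rule_format, of "[]" 0 x] by simp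
  moreover have "(\<lambda>y. D 0 y []) = f"
    using D(1) by simp
  ultimately show ?thesis
    by (auto intro: differentiableI)
qed

lemma is_kform_pullback:
  fixes f :: "'a::real_normed_vector \<Rightarrow> 'b::real_normed_vector"
  assumes f: "\<And>x. f differentiable (at x)" and \<omega>: "is_kform k \<omega>"
  shows "is_kform k (pullback f \<omega>)"
  unfolding is_kform_def
proof (intro conjI allI impI)
  fix p and ws :: "'a list" and i
  assume "length ws = k" "i < k"
  then have "linear (\<lambda>u. \<omega> (f p) ((map (frechet_derivative f (at p)) ws)[i := u]))"
    using \<omega> unfolding is_kform_def by simp
  then have "linear ((\<lambda>u. \<omega> (f p) ((map (frechet_derivative f (at p)) ws)[i := u]))
      \<circ> frechet_derivative f (at p))"
    using linear_frechet_derivative[OF f] by (rule linear_compose[rotated])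
  then show "linear (\<lambda>v. pullback f \<omega> p (ws[i := v]))"
    unfolding pullback_def by (simp add: map_update o_def)
qed (use \<omega> in \<open>auto simp: is_kform_def pullback_def\<close>)

lemma chain_norm_push_diff_cell_le_map_norm:
  assumes "enat j \<le> r" "length U = j" "length ws = k" "diff_cell_norm U ws = 1"
  shows "chain_norm k (enat j) (push_chain f (diff_cell U x ws)) \<le> map_norm k r f"
proof -
  have "chain_norm k (enat j) (push_chain f (diff_cell U x ws)) \<le> map_jnorm k j f"
    unfolding map_jnorm_def using assms(2-4)
    by (intro Sup_upper insertI2 CollectI exI[of _ U] exI[of _ x] exI[of _ ws])
      (simp add: one_ereal_def[symmetric])
  also have "\<dots> \<le> map_norm k r f"
    unfolding map_norm_def using assms(1) by (intro SUP_upper) simp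
  finally show ?thesis .
qed

lemma form_jnorm_pullback_le:
  fixes f :: "'a::real_inner \<Rightarrow> 'b::euclidean_space"
  assumes j: "enat j \<le> r" and f: "map_norm k r f < \<infinity>" and \<omega>: "Bform k r \<omega>"
  shows "form_jnorm k j (pullback f \<omega>)
    \<le> ereal (real_of_ereal (map_norm k r f) * real_of_ereal (form_norm k r \<omega>))"
    (is "_ \<le> ereal (?M * ?W)")
proof -
  have Wj: "0 \<le> real_of_ereal (form_norm k j \<omega>)" "real_of_ereal (form_norm k j \<omega>) \<le> ?W"
    using form_norm_mono[OF j, of k \<omega>] \<omega> form_norm_nonneg[of k j \<omega>]
    by (auto simp: Bform_def real_of_ereal_pos intro: real_of_ereal_positive_mono)
  have \<omega>j: "Bform k j \<omega>"
    using \<omega> form_norm_mono[OF j, of k \<omega>] by (auto simp: Bform_def)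
  have map_norm_eq: "map_norm k r f = ereal ?M"
    using f map_norm_nonneg[of k r f] by (cases "map_norm k r f") auto
  have M: "0 \<le> ?M"
    using map_norm_nonneg[of k r f] by (simp add: real_of_ereal_pos)
  have "\<bar>form_eval (pullback f \<omega>) (diff_cell U x ws)\<bar> \<le> ?M * ?W"
    if "length U = j" "length ws = k" "diff_cell_norm U ws = 1" for U x ws
  proof -
    have push: "chain_norm k j (push_chain f (diff_cell U x ws)) \<le> ereal ?M"
      using chain_norm_push_diff_cell_le_map_norm[where f = f and x = x, OF j that] map_norm_eq
      by simp
    have "\<bar>form_eval \<omega> (push_chain f (diff_cell U x ws))\<bar>
        \<le> ?M * real_of_ereal (form_norm k j \<omega>)"
      by (rule abs_form_eval_le[OF \<omega>j push])
    also have "\<dots> \<le> ?M * ?W"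
      using Wj(2) M by (rule mult_left_mono)
    finally show ?thesis
      by (simp add: form_eval_pullback)
  qed
  then show ?thesis
    unfolding form_jnorm_def using Wj M by (intro Sup_least) auto
qed

lemma form_norm_pullback_le:
  fixes f :: "'a::real_inner \<Rightarrow> 'b::euclidean_space"
  assumes "map_norm k r f < \<infinity>" "Bform k r \<omega>"
  shows "form_norm k r (pullback f \<omega>)
    \<le> ereal (real_of_ereal (map_norm k r f) * real_of_ereal (form_norm k r \<omega>))"
  unfolding form_norm_def[of k r "pullback f \<omega>"] using form_jnorm_pullback_le[OF _ assms]
  by (intro SUP_least) simp

lemma Bform_pullback:
  fixes f :: "'a::real_inner \<Rightarrow> 'b::euclidean_space"
  assumes "\<And>x. f differentiable (at x)" "map_norm k r f < \<infinity>" "Bform k r \<omega>"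
  shows "Bform k r (pullback f \<omega>)"
  using form_norm_pullback_le[OF assms(2,3)] is_kform_pullback[OF assms(1)] assms(3)
  by (auto simp: Bform_def intro: le_less_trans)

lemma form_eval_small_if_chain_norm_small:
  fixes \<omega> :: "'a::euclidean_space \<Rightarrow> 'a list \<Rightarrow> real"
  assumes \<omega>: "Bform k r \<omega>" and "0 < e"
  obtains \<delta> where "0 < \<delta>" "\<And>P :: 'a mchain. chain_norm k r P < ereal \<delta> \<Longrightarrow> \<bar>form_eval \<omega> P\<bar> < e"
proof -
  define N where "N = real_of_ereal (form_norm k r \<omega>)"
  have N: "0 \<le> N"
    by (simp add: N_def real_of_ereal_pos form_norm_nonneg)
  have "\<bar>form_eval \<omega> P\<bar> < e" if "chain_norm k r P < ereal (e / (N + 1))" for P :: "'a mchain"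
  proof -
    have "\<bar>form_eval \<omega> P\<bar> \<le> e / (N + 1) * N"
      using that unfolding N_def by (intro abs_form_eval_le[OF \<omega>]) simp
    also have "\<dots> < e"
      using N \<open>0 < e\<close> by (simp add: field_simps)
    finally show ?thesis .
  qed
  moreover have "0 < e / (N + 1)"
    using N \<open>0 < e\<close> by simp
  ultimately show ?thesis
    using that by blast
qed

lemma Cauchy_form_eval:
  fixes \<omega> :: "'a::euclidean_space \<Rightarrow> 'a list \<Rightarrow> real"
  assumes \<omega>: "Bform k r \<omega>" and P: "chain_Cauchy k r P"
  shows "Cauchy (\<lambda>i. form_eval \<omega> (P i))"
proof (rule CauchyI)
  fix e :: real
  assume "0 < e"
  then obtain \<delta> where "0 < \<delta>" and small: "\<And>P. chain_norm k r P < ereal \<delta> \<Longrightarrow> \<bar>form_eval \<omega> P\<bar> < e"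
    using form_eval_small_if_chain_norm_small[OF \<omega>] by blast
  then obtain M where "\<forall>m\<ge>M. \<forall>n\<ge>M. chain_norm k r (chain_diff (P m) (P n)) < ereal \<delta>"
    using P unfolding chain_Cauchy_def by blast
  then show "\<exists>M. \<forall>m\<ge>M. \<forall>n\<ge>M. norm (form_eval \<omega> (P m) - form_eval \<omega> (P n)) < e"
    using small by force
qed

lemma form_eval_tendsto_0:
  fixes \<omega> :: "'a::euclidean_space \<Rightarrow> 'a list \<Rightarrow> real"
  assumes \<omega>: "Bform k r \<omega>" and C: "(\<lambda>i. chain_norm k r (C i)) \<longlonglongrightarrow> 0"
  shows "(\<lambda>i. form_eval \<omega> (C i)) \<longlonglongrightarrow> 0"
proof (rule LIMSEQ_I)
  fix e :: real
  assume "0 < e"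
  then obtain \<delta> where "0 < \<delta>" and small: "\<And>P. chain_norm k r P < ereal \<delta> \<Longrightarrow> \<bar>form_eval \<omega> P\<bar> < e"
    using form_eval_small_if_chain_norm_small[OF \<omega>] by blast
  have "\<forall>\<^sub>F i in sequentially. chain_norm k r (C i) < ereal \<delta>"
    by (rule order_tendstoD(2)[OF C]) (simp add: \<open>0 < \<delta>\<close>)
  then show "\<exists>M. \<forall>n\<ge>M. norm (form_eval \<omega> (C n) - 0) < e"
    using small by (auto simp: eventually_sequentially)
qed

theorem mainTheorem11:
  fixes f :: "'v::euclidean_space \<Rightarrow> 'w::euclidean_space"
    and r :: enat and k :: nat
    and \<omega> :: "'w \<Rightarrow> 'w list \<Rightarrow> real"
    and P :: "nat \<Rightarrow> 'v mchain" and Q :: "nat \<Rightarrow> 'w mchain"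
  assumes "smooth_map f"
    and "map_norm k r f < \<infinity>"
    and "Bform k r \<omega>"
    and "chain_Cauchy k r P"
    and "\<forall>i. is_mchain k (Q i)"
    and "(\<lambda>i. chain_norm k r (chain_diff (Q i) (push_chain f (P i)))) \<longlonglongrightarrow> 0"
  shows "Bform k r (pullback f \<omega>) \<and>
         (\<exists>L. (\<lambda>i. form_eval (pullback f \<omega>) (P i)) \<longlonglongrightarrow> L \<and>
              (\<lambda>i. form_eval \<omega> (Q i)) \<longlonglongrightarrow> L)"
proof -
  have pull: "Bform k r (pullback f \<omega>)"
    using Bform_pullback[OF smooth_map_differentiable[OF assms(1)] assms(2,3)] .
  obtain L where L: "(\<lambda>i. form_eval (pullback f \<omega>) (P i)) \<longlonglongrightarrow> L"
    using Cauchy_form_eval[OF pull assms(4)] by (auto simp: Cauchy_convergent_iff convergent_def)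
  have "(\<lambda>i. form_eval \<omega> (Q i) - form_eval (pullback f \<omega>) (P i)) \<longlonglongrightarrow> 0"
    using form_eval_tendsto_0[OF assms(3,6)] by (simp add: form_eval_pullback)
  from tendsto_add[OF this L] have "(\<lambda>i. form_eval \<omega> (Q i)) \<longlonglongrightarrow> L"
    by simp
  with pull L show ?thesis
    by blast
qed

end
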